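(* Consider an instance of \textsc{Min-Lin-Eq$(q)$-Full} on the complete graph with $n$ vertices and $m=\binom n2$ edges, let $\mathrm{OPT_{val}}$ be its optimal value, let $\varepsilon=\mathrm{OPT_{val}}/m$ and assume $\varepsilon<\frac12$. Let $\nu=2/(1-2\varepsilon)$. Then the Voting Algorithm returns an assignment with at most $(\varepsilon+2\varepsilon^2\nu(2+\nu)+o(1))\,m$ unsatisfied constraints (where $o(1)$ is with respect to $n\to\infty$).
   Context: \textsc{Min-Lin-Eq$(q)$-Full}: given a complete simple graph $G=(V,E)$, $n=|V|$, $m=\binom n2$, a positive integer $q$, and for each ordered pair $(u,v)$ of distinct vertices an integer $c_{uv}\in\{0,\dots,q-1\}$ with $c_{vu}\equiv -c_{uv}\pmod q$, each edge $uv$ carries the constraint $x_u-x_v\equiv c_{uv}\pmod q$ on assignments $x:V\to\{0,\dots,q-1\}$; the goal is to minimize the number of violated constraints, whose minimum is $\mathrm{OPT_{val}}$. Voting Algorithm: for each choice of pivot $p\in V$: (1) label $p$ with $0$ and give each vertex $v\neq p$ the temporary label $\mathrm{TEMP}(v)=c_{vp}$; (2) for each vertex $v$, every vertex $u\notin\{p,v\}$ casts the vote $(c_{vu}+\mathrm{TEMP}(u))\bmod q$ for $v$; (3) each vertex $v$ receives as final label $\mathrm{FINAL}(v)$ a label occurring most often among its votes (ties broken arbitrarily). (4) Output, among all choices of $p$, the FINAL assignment violating the fewest constraints. *)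

theory Defs
  imports Complex_Main "HOL-Number_Theory.Cong"
begin

text \<open>Instances of Min-Lin-Eq(q)-Full on the complete graph with vertex set {0..<n}.
  The label of the ordered pair (u,v) is c u v; edge uv carries x u - x v = c u v (mod q).\<close>

definition valid_instance :: "int \<Rightarrow> nat \<Rightarrow> (nat \<Rightarrow> nat \<Rightarrow> int) \<Rightarrow> bool" where
  "valid_instance q n c \<longleftrightarrow> 0 < q \<and>
     (\<forall>u<n. \<forall>v<n. u \<noteq> v \<longrightarrow> 0 \<le> c u v \<and> c u v < q \<and> [c v u = - c u v] (mod q))"

definition assignment :: "int \<Rightarrow> nat \<Rightarrow> (nat \<Rightarrow> int) \<Rightarrow> bool" where
  "assignment q n x \<longleftrightarrow> (\<forall>v<n. 0 \<le> x v \<and> x v < q)"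

definition violations :: "int \<Rightarrow> nat \<Rightarrow> (nat \<Rightarrow> nat \<Rightarrow> int) \<Rightarrow> (nat \<Rightarrow> int) \<Rightarrow> nat" where
  "violations q n c x = card {(u, v). u < v \<and> v < n \<and> \<not> [x u - x v = c u v] (mod q)}"

definition opt_val :: "int \<Rightarrow> nat \<Rightarrow> (nat \<Rightarrow> nat \<Rightarrow> int) \<Rightarrow> nat" where
  "opt_val q n c = Min (violations q n c ` {x. assignment q n x})"

text \<open>Voting algorithm with pivot p: temporary labels, votes, and the admissible final labelings
  (any most frequent vote, ties broken arbitrarily).\<close>
definition temp_label :: "(nat \<Rightarrow> nat \<Rightarrow> int) \<Rightarrow> nat \<Rightarrow> nat \<Rightarrow> int" where
  "temp_label c p u = (if u = p then 0 else c u p)"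

definition vote_count :: "int \<Rightarrow> nat \<Rightarrow> (nat \<Rightarrow> nat \<Rightarrow> int) \<Rightarrow> nat \<Rightarrow> nat \<Rightarrow> int \<Rightarrow> nat" where
  "vote_count q n c p v a =
     card {u. u < n \<and> u \<noteq> p \<and> u \<noteq> v \<and> (c v u + temp_label c p u) mod q = a}"

definition voting_final :: "int \<Rightarrow> nat \<Rightarrow> (nat \<Rightarrow> nat \<Rightarrow> int) \<Rightarrow> nat \<Rightarrow> (nat \<Rightarrow> int) \<Rightarrow> bool" where
  "voting_final q n c p F \<longleftrightarrow> assignment q n F \<and>
     (\<forall>v<n. \<forall>a. 0 \<le> a \<and> a < q \<longrightarrow> vote_count q n c p v a \<le> vote_count q n c p v (F v))"

text \<open>Number of constraints violated by the algorithm's output, given the final labelings Fs p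
  obtained for each pivot p (the best one is output).\<close>
definition voting_output_cost :: "int \<Rightarrow> nat \<Rightarrow> (nat \<Rightarrow> nat \<Rightarrow> int) \<Rightarrow> (nat \<Rightarrow> nat \<Rightarrow> int) \<Rightarrow> nat" where
  "voting_output_cost q n c Fs = Min ((\<lambda>p. violations q n c (Fs p)) ` {..<n})"

end

theory Submission
  imports Defs
begin

(*
  Fix an optimal assignment x and run the algorithm with a pivot p of minimum x-violation
  degree D, so that n D <= 2 OPT.  Call v misled if its final label differs from x v - x p.
  A voter u whose constraints uv and up are both satisfied by x votes exactly x v - x p for v,
  so this label receives at least n - 2 - deg v - D votes.  For misled v the final label
  receives at least as many, and the two sets of voters are disjoint among the n - 2 voters;
  hence n - 2 <= 2 (deg v + D).  Summing, the number b of misled vertices satisfies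
  b (n - 2) <= 4 OPT + 2 b D, so b <= (eps nu + O(1/n)) n.  Constraints between non-misled
  vertices are violated exactly when x violates them, and a non-misled u violates its
  constraint to a misled v only if u = p, x violates up, or u did not vote for the final label
  of v: at most deg v + 2 D + 1 vertices.  So the output violates at most
  OPT + b^2 + b (2 D + 1) = (eps + 2 eps^2 nu (2 + nu) + O(1/n)) m constraints.
*)

subsection \<open>Double counting over a symmetric relation\<close>

lemma sum_card_sym_eq_twice_card_pairs:
  fixes n :: nat
  assumes sym: "\<And>u v. u < n \<Longrightarrow> v < n \<Longrightarrow> R u v \<Longrightarrow> R v u" and irrefl: "\<And>u. \<not> R u u"
  shows "(\<Sum>v<n. card {u. u < n \<and> R u v}) = 2 * card {(u, v). u < v \<and> v < n \<and> R u v}"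
proof -
  let ?P = "{(u, v). u < v \<and> v < n \<and> R u v}"
  have fin: "finite ?P" by (rule finite_subset[of _ "{..<n} \<times> {..<n}"]) auto
  have "(v, u) \<in> (SIGMA v:{..<n}. {u. u < n \<and> R u v}) \<longleftrightarrow> (v, u) \<in> ?P \<union> prod.swap ` ?P"
    for u v
    using sym[of u v] sym[of v u] irrefl[of u] by (cases u v rule: linorder_cases) auto
  then have "(SIGMA v:{..<n}. {u. u < n \<and> R u v}) = ?P \<union> prod.swap ` ?P"
    by (intro equalityI subrelI) blast+
  moreover have "?P \<inter> prod.swap ` ?P = {}" by auto
  ultimately have "(\<Sum>v<n. card {u. u < n \<and> R u v}) = card ?P + card (prod.swap ` ?P)"
    by (simp add: fin card_Un_disjoint flip: card_SigmaI)
  also have "card (prod.swap ` ?P) = card ?P" by (simp add: card_image)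
  finally show ?thesis by simp
qed

lemma sum_card_swap:
  assumes "finite X" "finite Y" "\<And>u v. u \<in> X \<Longrightarrow> v \<in> Y \<Longrightarrow> R u v \<longleftrightarrow> R v u"
  shows "(\<Sum>v\<in>Y. card {u\<in>X. R u v}) = (\<Sum>v\<in>X. card {u\<in>Y. R u v})"
proof -
  have "(\<Sum>v\<in>Y. card {u\<in>X. R u v}) = (\<Sum>v\<in>Y. \<Sum>u\<in>X. of_bool (R u v))"
    using assms(1) by (simp add: Int_def conj_commute)
  also have "\<dots> = (\<Sum>u\<in>X. \<Sum>v\<in>Y. of_bool (R v u))"
    using assms(3) by (subst sum.swap) (intro sum.cong refl, simp)
  also have "\<dots> = (\<Sum>v\<in>X. card {u\<in>Y. R u v})"
    using assms(2) by (simp add: Int_def conj_commute)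
  finally show ?thesis .
qed

lemma card_filter_split:
  assumes "finite A" "B \<subseteq> A"
  shows "card {u\<in>A. P u} = card {u\<in>A - B. P u} + card {u\<in>B. P u}"
proof -
  have "{u\<in>A. P u} = {u\<in>A - B. P u} \<union> {u\<in>B. P u}" using assms(2) by blast
  moreover have "finite B" using assms finite_subset by blast
  ultimately show ?thesis using assms(1) by (simp add: card_Un_disjoint disjoint_iff)
qed

lemma sum_card_split:
  assumes "finite A" "B \<subseteq> A" and sym: "\<And>u v. u \<in> A \<Longrightarrow> v \<in> A \<Longrightarrow> R u v \<longleftrightarrow> R v u"
  shows "(\<Sum>v\<in>A. card {u\<in>A. R u v}) =
    (\<Sum>v\<in>A - B. card {u\<in>A - B. R u v}) + 2 * (\<Sum>v\<in>B. card {u\<in>A - B. R u v})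
      + (\<Sum>v\<in>B. card {u\<in>B. R u v})"
proof -
  have fin: "finite B" "finite (A - B)" using assms(1,2) finite_subset by auto
  note split = card_filter_split[OF assms(1,2), of "\<lambda>u. R u v" for v]
  have swap: "(\<Sum>v\<in>A - B. card {u\<in>B. R u v}) = (\<Sum>v\<in>B. card {u\<in>A - B. R u v})"
    using fin assms(2) sym by (intro sum_card_swap) auto
  have "(\<Sum>v\<in>A. card {u\<in>A. R u v}) = (\<Sum>v\<in>A - B. card {u\<in>A. R u v}) + (\<Sum>v\<in>B. card {u\<in>A. R u v})"
    by (rule sum.subset_diff[OF assms(2,1)])
  also have "\<dots> = (\<Sum>v\<in>A - B. card {u\<in>A - B. R u v}) + (\<Sum>v\<in>A - B. card {u\<in>B. R u v})
      + (\<Sum>v\<in>B. card {u\<in>A - B. R u v}) + (\<Sum>v\<in>B. card {u\<in>B. R u v})"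
    by (simp only: split sum.distrib add.assoc)
  finally show ?thesis unfolding swap by simp
qed

subsection \<open>Violated constraints\<close>

lemma cong_vote_of_consistent_voter:
  fixes q :: int
  assumes "[c' = - c] (mod q)" "[xu - xv = c] (mod q)" "[xu - xp = d] (mod q)"
  shows "[c' + d = xv - xp] (mod q)"
proof -
  have "[c' + d = - c + (xu - xp)] (mod q)"
    using assms(1) cong_sym[OF assms(3)] by (rule cong_add)
  also have "[- c + (xu - xp) = - (xu - xv) + (xu - xp)] (mod q)"
    using cong_sym[OF assms(2)] by (intro cong_add) (simp_all only: cong_minus_minus_iff cong_refl)
  also have "- (xu - xv) + (xu - xp) = xv - xp" by simp
  finally show ?thesis .
qed

lemma cong_satisfied_by_followed_vote:
  fixes q :: int
  assumes "[c' = - c] (mod q)" "[xu - xp = d] (mod q)" "[fu = xu - xp] (mod q)"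
    and "[c' + d = fv] (mod q)"
  shows "[fu - fv = c] (mod q)"
proof -
  have "[fu - fv = (xu - xp) - (c' + d)] (mod q)"
    using assms(3) cong_sym[OF assms(4)] by (rule cong_diff)
  also have "[(xu - xp) - (c' + d) = d - (c' + d)] (mod q)"
    using assms(2) by (intro cong_diff) simp_all
  also have "d - (c' + d) = - c'" by simp
  also have "[- c' = c] (mod q)"
    using assms(1) cong_minus_minus_iff[of c' "- c" q] by simp
  finally show ?thesis .
qed

lemma cong_diff_shift_iff:
  fixes q :: int
  assumes "[yu - xu = yv - xv] (mod q)"
  shows "[yu - yv = c] (mod q) \<longleftrightarrow> [xu - xv = c] (mod q)"
proof -
  have "[yu - yv = xu - xv] (mod q)"
    using assms by (simp add: cong_iff_dvd_diff algebra_simps)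
  then show ?thesis by (blast intro: cong_trans cong_sym)
qed

definition violated ::
    "int \<Rightarrow> (nat \<Rightarrow> nat \<Rightarrow> int) \<Rightarrow> (nat \<Rightarrow> int) \<Rightarrow> nat \<Rightarrow> nat \<Rightarrow> bool" where
  "violated q c x u v \<longleftrightarrow> u \<noteq> v \<and> \<not> [x u - x v = c u v] (mod q)"

definition violation_degree ::
    "int \<Rightarrow> nat \<Rightarrow> (nat \<Rightarrow> nat \<Rightarrow> int) \<Rightarrow> (nat \<Rightarrow> int) \<Rightarrow> nat \<Rightarrow> nat" where
  "violation_degree q n c x v = card {u. u < n \<and> violated q c x u v}"

lemma valid_instance_antisym:
  assumes "valid_instance q n c" "u < n" "v < n" "u \<noteq> v"
  shows "[c v u = - c u v] (mod q)"
  using assms unfolding valid_instance_def by blast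

lemma violated_sym:
  assumes "valid_instance q n c" "u < n" "v < n"
  shows "violated q c x u v \<longleftrightarrow> violated q c x v u"
proof (cases "u = v")
  case False
  have anti: "[c v u = - c u v] (mod q)" using valid_instance_antisym[OF assms False] .
  have "[x v - x u = c v u] (mod q) \<longleftrightarrow> [x v - x u = - c u v] (mod q)"
    using cong_trans[OF _ anti] cong_trans[OF _ cong_sym[OF anti]] by blast
  also have "\<dots> \<longleftrightarrow> [x u - x v = c u v] (mod q)"
    using cong_minus_minus_iff[of "x u - x v" "c u v" q] by simp
  finally show ?thesis unfolding violated_def by auto
qed (simp add: violated_def)

lemma sum_violation_degree:
  assumes "valid_instance q n c"
  shows "(\<Sum>v<n. violation_degree q n c x v) = 2 * violations q n c x"
proof -
  have "(\<Sum>v<n. card {u. u < n \<and> violated q c x u v})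
      = 2 * card {(u, v). u < v \<and> v < n \<and> violated q c x u v}"
    by (rule sum_card_sym_eq_twice_card_pairs)
      (use violated_sym[OF assms] in blast, simp add: violated_def)
  also have "{(u, v). u < v \<and> v < n \<and> violated q c x u v}
      = {(u, v). u < v \<and> v < n \<and> \<not> [x u - x v = c u v] (mod q)}"
    by (auto simp: violated_def)
  finally show ?thesis unfolding violation_degree_def violations_def .
qed

lemma violation_degree_le:
  assumes "v < n"
  shows "violation_degree q n c x v \<le> n - 1"
proof -
  have "{u. u < n \<and> violated q c x u v} \<subseteq> {..<n} - {v}" by (auto simp: violated_def)
  then have "violation_degree q n c x v \<le> card ({..<n} - {v})"
    unfolding violation_degree_def by (intro card_mono) auto
  then show ?thesis using assms by simp
qed

lemma violations_le_choose_two: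
  assumes "valid_instance q n c"
  shows "violations q n c x \<le> n choose 2"
proof -
  have "2 * violations q n c x \<le> (\<Sum>v<n. n - 1)"
    unfolding sum_violation_degree[OF assms, symmetric] by (intro sum_mono violation_degree_le) simp
  then show ?thesis by (simp add: choose_two)
qed

lemma opt_val_attained:
  assumes "valid_instance q n c"
  obtains x where "violations q n c x = opt_val q n c"
proof -
  have "finite (violations q n c ` {x. assignment q n x})"
    by (rule finite_subset[of _ "{..n choose 2}"]) (auto simp: violations_le_choose_two[OF assms])
  moreover have "(\<lambda>_. 0) \<in> {x. assignment q n x}"
    using assms by (simp add: valid_instance_def assignment_def)
  ultimately have "opt_val q n c \<in> violations q n c ` {x. assignment q n x}"
    unfolding opt_val_def by (intro Min_in) auto
  then show ?thesis using that by force
qed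

lemma exists_low_violation_degree:
  assumes "valid_instance q n c" "0 < n"
  obtains p where "p < n" "n * violation_degree q n c x p \<le> 2 * violations q n c x"
proof -
  let ?d = "violation_degree q n c x"
  obtain p where p: "p < n" "\<And>v. v < n \<Longrightarrow> ?d p \<le> ?d v"
    using ex_has_least_nat[of "\<lambda>v. v < n" 0 ?d] assms(2) by blast
  have "n * ?d p = (\<Sum>v<n. ?d p)" by simp
  also have "\<dots> \<le> (\<Sum>v<n. ?d v)" using p(2) by (intro sum_mono) simp
  finally show ?thesis using that p(1) sum_violation_degree[OF assms(1)] by simp
qed

subsection \<open>One run of the voting algorithm\<close>

locale pivot_voting =
  fixes q :: int and n :: nat and c :: "nat \<Rightarrow> nat \<Rightarrow> int" and p :: nat
    and F :: "nat \<Rightarrow> int" and x :: "nat \<Rightarrow> int"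
  assumes valid: "valid_instance q n c" and pivot: "p < n" and two_le_n: "2 \<le> n"
    and final: "voting_final q n c p F"
begin

abbreviation deg :: "nat \<Rightarrow> nat" where
  "deg \<equiv> violation_degree q n c x"

definition shifted :: "nat \<Rightarrow> int" where
  "shifted v = (x v - x p) mod q"

definition misled :: "nat set" where
  "misled = {v. v < n \<and> F v \<noteq> shifted v}"

definition electorate :: "nat \<Rightarrow> nat set" where
  "electorate v = {u. u < n \<and> u \<noteq> p \<and> u \<noteq> v}"

text \<open>The vote of \<open>u \<noteq> p\<close> for \<open>v\<close> is \<open>c v u + TEMP(u)\<close> with \<open>TEMP(u) = c u p\<close>.\<close>

definition voters :: "nat \<Rightarrow> int \<Rightarrow> nat set" where
  "voters v a = {u. u < n \<and> u \<noteq> p \<and> u \<noteq> v \<and> (c v u + c u p) mod q = a}"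

lemma q_pos: "0 < q"
  using valid by (simp add: valid_instance_def)

lemma final_range: "v < n \<Longrightarrow> 0 \<le> F v \<and> F v < q"
  using final unfolding voting_final_def assignment_def by blast

lemma shifted_range: "0 \<le> shifted v \<and> shifted v < q"
  unfolding shifted_def using q_pos by simp

lemma misled_subset: "misled \<subseteq> {..<n}"
  unfolding misled_def by blast

lemma finite_voters: "finite (voters v a)"
  unfolding voters_def by simp

lemma voters_subset_electorate: "voters v a \<subseteq> electorate v"
  unfolding voters_def electorate_def by blast

lemma card_electorate:
  assumes "v < n" "v \<noteq> p"
  shows "card (electorate v) = n - 2"
proof -
  have "electorate v = {..<n} - {p, v}" unfolding electorate_def by auto
  then show ?thesis using assms pivot by (simp add: card_Diff_subset)
qed

lemma card_voters_le_final:
  assumes "v < n" "0 \<le> a" "a < q"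
  shows "card (voters v a) \<le> card (voters v (F v))"
proof -
  have "vote_count q n c p v b = card (voters v b)" for b
    unfolding vote_count_def voters_def temp_label_def by (rule arg_cong[where f = card]) auto
  then show ?thesis using final assms unfolding voting_final_def by metis
qed

lemma vote_of_consistent_voter:
  assumes "u < n" "v < n" "u \<noteq> p" "u \<noteq> v"
    and "\<not> violated q c x u v" "\<not> violated q c x u p"
  shows "[c v u + c u p = x v - x p] (mod q)"
  using assms valid_instance_antisym[OF valid assms(1,2,4)]
  by (intro cong_vote_of_consistent_voter[of _ "c u v" _ "x u"]) (auto simp: violated_def)

lemma card_consistent_voters:
  assumes "v < n" "v \<noteq> p"
  shows "n - 2 \<le> card (voters v (shifted v)) + deg v + deg p"
proof -
  have "electorate v \<subseteq> voters v (shifted v)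
      \<union> {u. u < n \<and> violated q c x u v} \<union> {u. u < n \<and> violated q c x u p}"
    using vote_of_consistent_voter assms(1)
    unfolding electorate_def voters_def shifted_def cong_def by auto
  then have "card (electorate v) \<le> card (voters v (shifted v)
      \<union> {u. u < n \<and> violated q c x u v} \<union> {u. u < n \<and> violated q c x u p})"
    by (intro card_mono) (simp_all add: finite_voters)
  also have "\<dots> \<le> card (voters v (shifted v)) + deg v + deg p"
    unfolding violation_degree_def by (intro card_Un_le[THEN order_trans] add_right_mono card_Un_le)
  finally show ?thesis using card_electorate[OF assms] by simp
qed

lemma pivot_not_misled: "p \<notin> misled"
proof
  assume "p \<in> misled"
  then have "F p \<noteq> 0" unfolding misled_def shifted_def by simp
  have unanimous: "(c p u + c u p) mod q = 0" if "u < n" "u \<noteq> p" for u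
    using valid_instance_antisym[OF valid that(1) pivot that(2)]
    by (simp add: cong_iff_dvd_diff dvd_eq_mod_eq_0)
  have "card (voters p 0) = n - 1"
  proof -
    have "voters p 0 = {..<n} - {p}" unfolding voters_def using unanimous by auto
    then show ?thesis using pivot by simp
  qed
  moreover have "voters p (F p) = {}" unfolding voters_def using unanimous \<open>F p \<noteq> 0\<close> by auto
  ultimately show False
    using card_voters_le_final[OF pivot, of 0] q_pos two_le_n by simp
qed

lemma misled_degree_bound:
  assumes "v \<in> misled"
  shows "n - 2 \<le> 2 * deg v + 2 * deg p"
proof -
  have v: "v < n" "v \<noteq> p" "F v \<noteq> shifted v"
    using assms pivot_not_misled unfolding misled_def by auto
  have "card (voters v (F v)) + card (voters v (shifted v)) = card (voters v (F v) \<union> voters v (shifted v))"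
    using v(3) by (intro card_Un_disjoint[symmetric]) (auto simp: finite_voters voters_def)
  also have "\<dots> \<le> card (electorate v)"
    using voters_subset_electorate by (intro card_mono) (auto simp: electorate_def)
  finally have "card (voters v (F v)) + card (voters v (shifted v)) \<le> n - 2"
    using card_electorate[OF v(1,2)] by simp
  moreover have "card (voters v (shifted v)) \<le> card (voters v (F v))"
    using card_voters_le_final[OF v(1)] shifted_range by blast
  ultimately show ?thesis using card_consistent_voters[OF v(1,2)] by linarith
qed

lemma follower_satisfies_constraint:
  assumes u: "u \<in> {..<n} - misled" "u \<noteq> p" "\<not> violated q c x u p" "u \<in> voters v (F v)"
    and "v < n"
  shows "\<not> violated q c F u v"
proof -
  have "u \<noteq> v" using u(4) by (simp add: voters_def)
  have "[F u - F v = c u v] (mod q)"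
  proof (rule cong_satisfied_by_followed_vote)
    show "[c v u = - c u v] (mod q)"
      using valid_instance_antisym[OF valid _ \<open>v < n\<close> \<open>u \<noteq> v\<close>] u(1) by simp
    show "[x u - x p = c u p] (mod q)"
      using u(2,3) by (simp add: violated_def)
    show "[F u = x u - x p] (mod q)"
      using u(1) by (simp add: misled_def shifted_def cong_def)
    show "[c v u + c u p = F v] (mod q)"
      using u(4) final_range[OF \<open>v < n\<close>] by (simp add: voters_def cong_def)
  qed
  then show ?thesis by (simp add: violated_def)
qed

lemma misled_cross_violations:
  assumes "v \<in> misled"
  shows "card {u \<in> {..<n} - misled. violated q c F u v} \<le> deg v + 2 * deg p + 1"
proof -
  have v: "v < n" "v \<noteq> p" using assms pivot_not_misled unfolding misled_def by auto
  have "{u \<in> {..<n} - misled. violated q c F u v}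
      \<subseteq> {p} \<union> {u. u < n \<and> violated q c x u p} \<union> (electorate v - voters v (F v))"
  proof
    fix u
    assume u: "u \<in> {u \<in> {..<n} - misled. violated q c F u v}"
    then have "u \<noteq> v" by (simp add: violated_def)
    with u follower_satisfies_constraint[of u v] v(1)
    show "u \<in> {p} \<union> {u. u < n \<and> violated q c x u p} \<union> (electorate v - voters v (F v))"
      by (auto simp: electorate_def)
  qed
  then have "card {u \<in> {..<n} - misled. violated q c F u v}
      \<le> card ({p} \<union> {u. u < n \<and> violated q c x u p} \<union> (electorate v - voters v (F v)))"
    by (intro card_mono) (simp_all add: electorate_def)
  also have "\<dots> \<le> 1 + deg p + card (electorate v - voters v (F v))"
    unfolding violation_degree_def
    by (intro card_Un_le[THEN order_trans] add_right_mono card_Un_le[THEN order_trans]) simp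
  also have "card (electorate v - voters v (F v)) = (n - 2) - card (voters v (F v))"
    using voters_subset_electorate card_electorate[OF v] by (simp add: card_Diff_subset finite_voters)
  moreover have "card (voters v (shifted v)) \<le> card (voters v (F v))"
    using card_voters_le_final[OF v(1)] shifted_range by blast
  ultimately show ?thesis using card_consistent_voters[OF v] by linarith
qed

lemma violated_iff_if_not_misled:
  assumes "u \<in> {..<n} - misled" "v \<in> {..<n} - misled"
  shows "violated q c F u v \<longleftrightarrow> violated q c x u v"
proof -
  have shift: "[F w - x w = - x p] (mod q)" if "w \<in> {..<n} - misled" for w
  proof -
    have "[F w - x w = (x w - x p) - x w] (mod q)"
      using that by (intro cong_diff) (simp_all add: misled_def shifted_def cong_def)
    then show ?thesis by simp
  qed
  have "[F u - x u = F v - x v] (mod q)"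
    using shift[OF assms(1)] cong_sym[OF shift[OF assms(2)]] by (rule cong_trans)
  then show ?thesis unfolding violated_def using cong_diff_shift_iff by blast
qed

lemma card_misled_bound:
  "card misled * (n - 2) \<le> 4 * violations q n c x + 2 * card misled * deg p"
proof -
  have "card misled * (n - 2) = (\<Sum>v\<in>misled. n - 2)" by simp
  also have "\<dots> \<le> (\<Sum>v\<in>misled. 2 * deg v + 2 * deg p)" by (intro sum_mono misled_degree_bound)
  also have "\<dots> = 2 * (\<Sum>v\<in>misled. deg v) + 2 * card misled * deg p"
    by (simp add: sum.distrib sum_distrib_left)
  also have "(\<Sum>v\<in>misled. deg v) \<le> (\<Sum>v<n. deg v)"
    using misled_subset by (intro sum_mono2) auto
  also have "(\<Sum>v<n. deg v) = 2 * violations q n c x"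
    by (rule sum_violation_degree[OF valid])
  finally show ?thesis by simp
qed

lemma violations_final_bound:
  "violations q n c F
     \<le> violations q n c x + card misled * card misled + card misled * (2 * deg p + 1)"
proof -
  let ?N = "{..<n} - misled" and ?b = "card misled"
  define S where "S z X Y = (\<Sum>v\<in>Y. card {u\<in>X. violated q c z u v})" for z X Y
  have finite_misled: "finite misled" using misled_subset finite_subset by blast
  have split: "2 * violations q n c z = S z ?N ?N + 2 * S z ?N misled + S z misled misled" for z
  proof -
    have "2 * violations q n c z = (\<Sum>v\<in>{..<n}. card {u\<in>{..<n}. violated q c z u v})"
      using sum_violation_degree[OF valid, of z] by (simp add: violation_degree_def)
    also have "\<dots> = S z ?N ?N + 2 * S z ?N misled + S z misled misled"
      unfolding S_def using misled_subset violated_sym[OF valid]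
      by (intro sum_card_split) auto
    finally show ?thesis .
  qed
  have inner: "S z misled misled \<le> ?b * ?b" for z
  proof -
    have "S z misled misled \<le> (\<Sum>v\<in>misled. ?b)"
      unfolding S_def using finite_misled by (intro sum_mono card_mono) auto
    then show ?thesis by simp
  qed
  have same: "S F ?N ?N = S x ?N ?N"
    unfolding S_def using violated_iff_if_not_misled
    by (intro sum.cong refl arg_cong[where f = card]) auto
  have "S F ?N misled \<le> (\<Sum>v\<in>misled. deg v + (2 * deg p + 1))"
    unfolding S_def using misled_cross_violations by (intro sum_mono) (simp add: add.assoc)
  also have "\<dots> = (\<Sum>v\<in>misled. deg v) + ?b * (2 * deg p + 1)"
    unfolding sum.distrib by simp
  also have "(\<Sum>v\<in>misled. deg v) = S x ?N misled + S x misled misled"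
  proof -
    have "deg v = card {u\<in>?N. violated q c x u v} + card {u\<in>misled. violated q c x u v}" for v
      using card_filter_split[OF finite_lessThan misled_subset, of "\<lambda>u. violated q c x u v"]
      by (simp add: violation_degree_def)
    then show ?thesis unfolding S_def by (simp add: sum.distrib)
  qed
  finally have cross: "S F ?N misled \<le> S x ?N misled + S x misled misled + ?b * (2 * deg p + 1)" .
  show ?thesis using split[of F] split[of x] same cross inner[of F] inner[of x] by linarith
qed

end

lemma voting_output_cost_bound:
  assumes valid: "valid_instance q n c" and n: "2 \<le> n"
    and final: "\<forall>p<n. voting_final q n c p (Fs p)"
  obtains D b where "n * D \<le> 2 * opt_val q n c" "b * (n - 2) \<le> 4 * opt_val q n c + 2 * b * D"
    "voting_output_cost q n c Fs \<le> opt_val q n c + b * b + b * (2 * D + 1)" "b \<le> n"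
proof -
  obtain x where x: "violations q n c x = opt_val q n c"
    using opt_val_attained[OF valid] .
  obtain p where p: "p < n" "n * violation_degree q n c x p \<le> 2 * violations q n c x"
    using exists_low_violation_degree[OF valid] n by auto
  interpret pivot_voting q n c p "Fs p" x
    using valid p(1) n final by unfold_locales auto
  have "voting_output_cost q n c Fs \<le> violations q n c (Fs p)"
    unfolding voting_output_cost_def using p(1) by (intro Min_le) auto
  show ?thesis
  proof (rule that)
    show "n * deg p \<le> 2 * opt_val q n c" using p(2) x by simp
    show "card misled * (n - 2) \<le> 4 * opt_val q n c + 2 * card misled * deg p"
      using card_misled_bound x by simp
    show "voting_output_cost q n c Fs
        \<le> opt_val q n c + card misled * card misled + card misled * (2 * deg p + 1)"
      using \<open>voting_output_cost q n c Fs \<le> violations q n c (Fs p)\<close> violations_final_bound x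
      by linarith
    show "card misled \<le> n"
      using card_mono[OF finite_lessThan misled_subset] by simp
  qed
qed

lemma voting_output_cost_le_choose_two:
  assumes "valid_instance q n c" "0 < n"
  shows "voting_output_cost q n c Fs \<le> n choose 2"
proof -
  have "voting_output_cost q n c Fs \<le> violations q n c (Fs 0)"
    unfolding voting_output_cost_def using assms(2) by (intro Min_le) auto
  then show ?thesis using violations_le_choose_two[OF assms(1)] by (rule order_trans)
qed

subsection \<open>The asymptotic estimate\<close>

lemma real_choose_two: "real (n choose 2) = real n * (real n - 1) / 2"
  by (simp add: binomial_gbinomial gbinomial_prod_rev numeral_2_eq_2 prod.atLeast0_lessThan_Suc)

lemma misled_count_real_bound:
  fixes N e b D :: real
  assumes N: "101 \<le> N" and e: "0 \<le> e" "e < 1/4" and b: "0 \<le> b"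
    and D: "D \<le> e * (N - 1)"
    and count: "b * (N - 2) \<le> 2 * e * N * (N - 1) + 2 * b * D"
  shows "b \<le> 2 * e / (1 - 2 * e) * N + 5"
proof -
  define t where "t = 1 - 2 * e"
  define w where "w = 2 * e / t"
  have t: "1/2 < t" using e unfolding t_def by simp
  have wt: "w * t = 2 * e" using t unfolding w_def by simp
  have w: "0 \<le> w" "w \<le> 1" using e t unfolding w_def t_def by (simp_all add: field_simps)
  have "b * (t * (N - 1) - 1) = b * (N - 2) - 2 * b * (e * (N - 1))"
    unfolding t_def by (simp add: algebra_simps)
  also have "\<dots> \<le> 2 * e * N * (N - 1)"
    using count mult_left_mono[OF D, of "2 * b"] b by (simp add: algebra_simps)
  also have "\<dots> = w * N * (t * (N - 1) - 1) + w * N"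
    using wt by (simp add: algebra_simps)
  finally have key: "(b - w * N) * (t * (N - 1) - 1) \<le> w * N"
    by (simp add: algebra_simps)
  have gap: "N / 5 \<le> t * (N - 1) - 1"
  proof -
    have "1/2 * (N - 1) \<le> t * (N - 1)" using t N by (intro mult_right_mono) auto
    moreover have "N / 5 \<le> 1/2 * (N - 1) - 1" using N by (simp add: field_simps)
    ultimately show ?thesis by linarith
  qed
  show ?thesis
  proof (cases "b \<le> w * N")
    case False
    then have "(b - w * N) * (N / 5) \<le> (b - w * N) * (t * (N - 1) - 1)"
      using gap by (intro mult_left_mono) auto
    also have "\<dots> \<le> N" using key w N mult_right_mono[OF w(2), of N] by linarith
    finally have "(b - w * N) * N \<le> 5 * N" by simp
    then show ?thesis using N unfolding w_def t_def by simp
  qed (use w N in \<open>auto simp: w_def t_def\<close>)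
qed

lemma cost_real_bound:
  fixes N e w b D C :: real
  assumes N: "101 \<le> N" and e: "0 \<le> e" "e < 1/4" and w: "0 \<le> w" "w \<le> 1"
    and b: "0 \<le> b" "b \<le> N" "b \<le> w * N + 5" and D: "0 \<le> D" "D \<le> e * (N - 1)"
    and C: "C \<le> e * (N * (N - 1) / 2) + b * b + b * (2 * D + 1)"
  shows "C \<le> e * (N * (N - 1) / 2) + 2 * w * e * N * (N - 1) + w^2 * N * (N - 1) + 50 * (N - 1)"
proof -
  have "b * b \<le> (w * N + 5) * (w * N + 5)" using b by (intro mult_mono) auto
  also have "\<dots> = w^2 * N * (N - 1) + (w^2 * N + 10 * (w * N) + 25)"
    by (simp add: algebra_simps power2_eq_square)
  also have "\<dots> \<le> w^2 * N * (N - 1) + (N + 10 * N + 25)"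
  proof -
    have "w^2 * N \<le> N" "w * N \<le> N"
      using w N by (simp_all add: mult_left_le_one_le power_le_one)
    then show ?thesis by linarith
  qed
  finally have bb: "b * b \<le> w^2 * N * (N - 1) + 11 * N + 25" by simp
  have "b * (2 * D) \<le> (w * N + 5) * (2 * (e * (N - 1)))"
    using b D by (intro mult_mono) auto
  also have "\<dots> = 2 * w * e * N * (N - 1) + 10 * e * (N - 1)"
    by (simp add: algebra_simps)
  also have "10 * e * (N - 1) \<le> 3 * (N - 1)"
    using e N by (intro mult_right_mono) auto
  finally have bD: "b * (2 * D) \<le> 2 * w * e * N * (N - 1) + 3 * (N - 1)" by simp
  have "b * (2 * D + 1) = b * (2 * D) + b" by (simp add: algebra_simps)
  then show ?thesis using C bb bD b N by argo
qed

lemma cost_bound_from_counts: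
  fixes n OP D b C :: nat and \<epsilon> \<nu> :: real
  assumes n: "101 \<le> n" and deg: "n * D \<le> 2 * OP" and count: "b * (n - 2) \<le> 4 * OP + 2 * b * D"
    and cost: "C \<le> OP + b * b + b * (2 * D + 1)" and "b \<le> n"
    and \<epsilon>: "\<epsilon> = OP / real (n choose 2)" "\<epsilon> < 1/4" and \<nu>: "\<nu> = 2 / (1 - 2 * \<epsilon>)"
  shows "real C \<le> (\<epsilon> + 2 * \<epsilon>^2 * \<nu> * (2 + \<nu>) + 100 / real n) * real (n choose 2)"
proof -
  define N where "N = real n"
  have N: "101 \<le> N" using n unfolding N_def by simp
  have m: "real (n choose 2) = N * (N - 1) / 2"
    unfolding N_def by (rule real_choose_two)
  have OP: "real OP = \<epsilon> * (N * (N - 1) / 2)" and "0 \<le> \<epsilon>"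
    using \<epsilon>(1) N unfolding m by simp_all
  have "N * real D \<le> N * (\<epsilon> * (N - 1))"
    using deg OP unfolding N_def by (simp add: algebra_simps flip: of_nat_mult)
  then have D: "real D \<le> \<epsilon> * (N - 1)" using N by simp
  have "real (b * (n - 2)) \<le> real (4 * OP + 2 * b * D)"
    using count by (rule of_nat_mono)
  then have "real b * (N - 2) \<le> 4 * real OP + 2 * real b * real D"
    using n unfolding N_def by (simp add: of_nat_diff)
  moreover have "4 * real OP = 2 * \<epsilon> * N * (N - 1)"
    unfolding OP by simp
  ultimately have "real b * (N - 2) \<le> 2 * \<epsilon> * N * (N - 1) + 2 * real b * real D"
    by linarith
  moreover have w: "\<epsilon> * \<nu> = 2 * \<epsilon> / (1 - 2 * \<epsilon>)"
    unfolding \<nu> by simp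
  ultimately have b: "real b \<le> \<epsilon> * \<nu> * N + 5"
    using misled_count_real_bound[OF N \<open>0 \<le> \<epsilon>\<close> \<epsilon>(2) of_nat_0_le_iff D] by simp
  have "real C \<le> \<epsilon> * (N * (N - 1) / 2) + 2 * (\<epsilon> * \<nu>) * \<epsilon> * N * (N - 1)
      + (\<epsilon> * \<nu>)^2 * N * (N - 1) + 50 * (N - 1)"
  proof (rule cost_real_bound[OF N \<open>0 \<le> \<epsilon>\<close> \<epsilon>(2)])
    show "0 \<le> \<epsilon> * \<nu>" "\<epsilon> * \<nu> \<le> 1"
      using \<open>0 \<le> \<epsilon>\<close> \<epsilon>(2) unfolding w by (simp_all add: field_simps)
    show "real C \<le> \<epsilon> * (N * (N - 1) / 2) + real b * real b + real b * (2 * real D + 1)"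
    proof -
      have "real C \<le> real OP + real b * real b + real b * (2 * real D + 1)"
        using of_nat_mono[OF cost, where 'a = real] by (simp add: algebra_simps)
      then show ?thesis unfolding OP .
    qed
  qed (use b D \<open>b \<le> n\<close> N_def in auto)
  also have "\<dots> = (\<epsilon> + 2 * \<epsilon>^2 * \<nu> * (2 + \<nu>) + 100 / N) * (N * (N - 1) / 2)"
    using N by (simp add: field_simps power2_eq_square)
  finally show ?thesis unfolding m N_def .
qed

lemma voting_bound_factor_ge_one:
  fixes \<epsilon> \<nu> :: real
  assumes "0 < n" "0 \<le> \<epsilon>" "\<epsilon> < 1/2" "\<nu> = 2 / (1 - 2 * \<epsilon>)" "n \<le> 100 \<or> 1/4 \<le> \<epsilon>"
  shows "1 \<le> \<epsilon> + 2 * \<epsilon>^2 * \<nu> * (2 + \<nu>) + 100 / real n"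
proof -
  have "0 < \<nu>" using assms(3,4) by simp
  have expand: "2 * \<epsilon>^2 * \<nu> * (2 + \<nu>) = 4 * \<epsilon>^2 * \<nu> + 2 * (\<epsilon> * \<nu>)^2"
    by (simp add: algebra_simps power2_eq_square)
  have "0 \<le> 4 * \<epsilon>^2 * \<nu>" "0 \<le> 100 / real n" using \<open>0 < \<nu>\<close> by simp_all
  moreover consider "n \<le> 100" | "1/4 \<le> \<epsilon>" using assms(5) by blast
  then have "1 \<le> 2 * (\<epsilon> * \<nu>)^2 + 100 / real n"
  proof cases
    case 1
    then have "1 \<le> 100 / real n" using assms(1) by (simp add: field_simps)
    then show ?thesis using zero_le_power2[of "\<epsilon> * \<nu>"] by linarith
  next
    case 2
    then have "1 \<le> 2 * \<epsilon> / (1 - 2 * \<epsilon>)" using assms(3) by (simp add: le_divide_eq)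
    also have "\<dots> = \<epsilon> * \<nu>" using assms(4) by simp
    finally have "1 \<le> \<epsilon> * \<nu>" .
    then have "1 \<le> (\<epsilon> * \<nu>)^2" by (simp add: one_le_power)
    moreover have "0 \<le> 100 / real n" by simp
    ultimately show ?thesis by linarith
  qed
  ultimately show ?thesis using expand assms(2) by linarith
qed

lemma voting_output_cost_real_bound:
  assumes n: "0 < n" and valid: "valid_instance q n c"
    and final: "\<forall>p<n. voting_final q n c p (Fs p)"
    and \<epsilon>: "\<epsilon> = real (opt_val q n c) / real (n choose 2)" "\<epsilon> < 1/2"
    and \<nu>: "\<nu> = 2 / (1 - 2 * \<epsilon>)"
  shows "real (voting_output_cost q n c Fs)
    \<le> (\<epsilon> + 2 * \<epsilon>^2 * \<nu> * (2 + \<nu>) + 100 / real n) * real (n choose 2)"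
proof (cases "101 \<le> n \<and> \<epsilon> < 1/4")
  case True
  then have "2 \<le> n" by simp
  then obtain D b where "n * D \<le> 2 * opt_val q n c" "b * (n - 2) \<le> 4 * opt_val q n c + 2 * b * D"
    "voting_output_cost q n c Fs \<le> opt_val q n c + b * b + b * (2 * D + 1)" "b \<le> n"
    using voting_output_cost_bound[OF valid _ final] by blast
  then show ?thesis using True \<epsilon> \<nu> by (intro cost_bound_from_counts) simp_all
next
  case False
  have "0 \<le> \<epsilon>" using \<epsilon>(1) by simp
  then have "1 \<le> \<epsilon> + 2 * \<epsilon>^2 * \<nu> * (2 + \<nu>) + 100 / real n"
    using False n \<epsilon>(2) \<nu> by (intro voting_bound_factor_ge_one) auto
  from mult_right_mono[OF this, of "real (n choose 2)"]
  show ?thesis using voting_output_cost_le_choose_two[OF valid n, of Fs] by simp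
qed

theorem lemma1:
  shows "\<exists>g :: nat \<Rightarrow> real. g \<longlonglongrightarrow> 0 \<and>
    (\<forall>n q c Fs. 0 < n \<longrightarrow> valid_instance q n c \<longrightarrow>
       (\<forall>p<n. voting_final q n c p (Fs p)) \<longrightarrow>
       (let m = real (n choose 2);
            \<epsilon> = real (opt_val q n c) / m;
            \<nu> = 2 / (1 - 2 * \<epsilon>)
        in \<epsilon> < 1/2 \<longrightarrow>
           real (voting_output_cost q n c Fs) \<le> (\<epsilon> + 2 * \<epsilon>^2 * \<nu> * (2 + \<nu>) + g n) * m))"
proof (intro exI conjI allI impI)
  show "(\<lambda>n. 100 / real n) \<longlonglongrightarrow> 0" by (rule lim_const_over_n)
  fix n q c Fs
  assume "0 < n" "valid_instance q n c" "\<forall>p<n. voting_final q n c p (Fs p)"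
  then show "let m = real (n choose 2); \<epsilon> = real (opt_val q n c) / m; \<nu> = 2 / (1 - 2 * \<epsilon>)
    in \<epsilon> < 1/2 \<longrightarrow>
       real (voting_output_cost q n c Fs) \<le> (\<epsilon> + 2 * \<epsilon>^2 * \<nu> * (2 + \<nu>) + 100 / real n) * m"
    unfolding Let_def using voting_output_cost_real_bound by blast
qed

end
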